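(* Let $0<\delta<1$, $0<\varepsilon<1/7$, $2<\alpha<\min(\frac{2}{1-\delta},3)$ and $0<\rho<\min\!\left(\frac{1-\delta}{2},\frac{2-\alpha(1-\delta)}{4}\right)$ be constants, $p=n^{\delta-1}$, and $H$ a balanced graph on $m=n^{\rho}$ vertices with average degree $\alpha$; let $n$ be sufficiently large. Let $p(G)$ denote the probability of outputting the graph $G$ under $G(n,p)$ and $p_H(G)$ the probability of outputting $G$ under $G_H(n,p)$. Then for every constant $\beta\in[0,1)$, with probability at least $1-\frac{4\varepsilon}{(1-\beta)^2}$ over $G\sim G(n,p)$, $p_H(G)\ge\beta\,p(G)$.
   Context: A graph with average degree $\alpha$ is balanced if every induced subgraph has average degree at most $\alpha$. $G(n,p)$ is the Erdős–Rényi random graph on $[n]$. With $H$ on vertex set $[m]$ ($m$ dividing $n$), partition $[n]$ into parts $P_i=\{(i-1)\frac nm+1,\dots,i\frac nm\}$. Distribution $G_H(n,p)$: sample $G'\sim G(n,p)$, choose a uniformly random set $M=\{v_1,\dots,v_m\}$ with $v_i\in P_i$, and replace the induced subgraph $G'[M]$ by a copy of $H$ with vertex $i$ of $H$ placed at $v_i$. *)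

theory Defs
  imports "HOL-Probability.Probability"
begin

text \<open>Simple graphs on vertex set {1..n} are represented by their edge sets:
  sets of 2-element subsets of {1..n}.\<close>

definition all_pairs :: "nat \<Rightarrow> nat set set" where
  "all_pairs n = {e. e \<subseteq> {1..n} \<and> card e = 2}"

definition is_graph :: "nat \<Rightarrow> nat set set \<Rightarrow> bool" where
  "is_graph n E \<longleftrightarrow> E \<subseteq> all_pairs n"

definition induced_avg_degree :: "nat set set \<Rightarrow> nat set \<Rightarrow> real" where
  "induced_avg_degree E S = 2 * real (card {e \<in> E. e \<subseteq> S}) / real (card S)"

definition avg_degree :: "nat \<Rightarrow> nat set set \<Rightarrow> real" where
  "avg_degree n E = induced_avg_degree E {1..n}"

definition balanced :: "nat \<Rightarrow> nat set set \<Rightarrow> bool" where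
  "balanced m E \<longleftrightarrow> (\<forall>S. S \<subseteq> {1..m} \<and> S \<noteq> {} \<longrightarrow> induced_avg_degree E S \<le> avg_degree m E)"

definition gnp :: "nat \<Rightarrow> real \<Rightarrow> nat set set pmf" where
  "gnp n p = map_pmf (\<lambda>f. {e \<in> all_pairs n. f e})
                     (Pi_pmf (all_pairs n) False (\<lambda>_. bernoulli_pmf p))"

definition part :: "nat \<Rightarrow> nat \<Rightarrow> nat \<Rightarrow> nat set" where
  "part n m i = {(i - 1) * (n div m) + 1 .. i * (n div m)}"

definition plant :: "nat \<Rightarrow> nat set set \<Rightarrow> (nat \<Rightarrow> nat) \<Rightarrow> nat set set \<Rightarrow> nat set set" where
  "plant m H v G' = {e \<in> G'. \<not> e \<subseteq> v ` {1..m}} \<union> (image v) ` H"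

definition gHnp :: "nat \<Rightarrow> real \<Rightarrow> nat \<Rightarrow> nat set set \<Rightarrow> nat set set pmf" where
  "gHnp n p m H =
     bind_pmf (gnp n p) (\<lambda>G'.
     bind_pmf (pmf_of_set (PiE {1..m} (part n m))) (\<lambda>v.
     return_pmf (plant m H v G')))"

end

theory Submission
  imports Defs
begin

(*
  Second-moment method. Since the pairs of G(n,p) are independent, overwriting the pairs inside
  v({1..m}) by the copy of H placed at v has the law of G(n,p) conditioned on the event E_v that
  these pairs carry exactly that copy. So G_H(n,p) is the uniform mixture of these conditionals,
  and p_H(G) = L(G) p(G) for the average L of the normalized indicators 1_{E_v} / P(E_v).
  Then E L = 1, and by Chebyshev it suffices to show E L^2 <= 1 + eps.

  E L^2 averages P(E_v and E_w) / (P(E_v) P(E_w)) over pairs of transversals v, w; this is at most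
  the inverse probability of the prescribed pattern on the pairs common to both copies. If v and w
  share t vertices, balancedness of H allows at most alpha t / 2 common H-edges, and there are at
  most m t common pairs, so the ratio is at most y^t with y = p^(-alpha/2) (1-p)^(-m). Summing
  y^t over w factorizes over the m parts of size k = n/m, giving E L^2 <= ((y + k - 1) / k)^m
  <= exp (m^2 y / n), and m^2 y / n = O(n^(2 rho + (1 - delta) alpha / 2 - 1)) tends to 0.
*)

lemma power_ratio_le_exp:
  fixes k y :: real
  assumes "0 < k" "1 \<le> y"
  shows "((y + k - 1) / k) ^ m \<le> exp (real m * y / k)"
proof -
  have "(y + k - 1) / k \<le> exp (y / k)"
    using exp_ge_add_one_self[of "y / k"] assms by (simp add: field_simps)
  then have "((y + k - 1) / k) ^ m \<le> exp (y / k) ^ m"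
    using assms by (intro power_mono) auto
  then show ?thesis
    by (simp add: exp_of_nat_mult[symmetric])
qed

lemma power_inverse_one_minus_le_two:
  fixes p :: real
  assumes "0 \<le> p" "p < 1" "real m * p \<le> 1 / 2"
  shows "(1 / (1 - p)) ^ m \<le> 2"
proof -
  have "1 / 2 \<le> (1 - p) ^ m"
    using Bernoulli_inequality[of "- p" m] assms by simp
  then show ?thesis
    using assms by (simp add: power_one_over field_simps)
qed

lemma eventually_powr_less:
  assumes "s < 0" "0 < b"
  shows "\<forall>\<^sub>F n in sequentially. real n powr s < b"
  using tendsto_neg_powr[OF assms(1) filterlim_real_sequentially] assms(2) by (rule order_tendstoD(2))

lemma sum_PiE_power_card_agree:
  fixes y :: real
  assumes I: "finite I" and B: "\<And>i. i \<in> I \<Longrightarrow> finite (B i)" and v: "v \<in> (\<Pi>\<^sub>E i\<in>I. B i)"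
  shows "(\<Sum>w\<in>(\<Pi>\<^sub>E i\<in>I. B i). y ^ card {i \<in> I. v i = w i}) = (\<Prod>i\<in>I. y + real (card (B i)) - 1)"
proof -
  have "(\<Sum>w\<in>(\<Pi>\<^sub>E i\<in>I. B i). y ^ card {i \<in> I. v i = w i})
      = (\<Sum>w\<in>(\<Pi>\<^sub>E i\<in>I. B i). \<Prod>i\<in>I. if v i = w i then y else 1)"
    using I by (simp add: prod.If_cases Int_def)
  also have "\<dots> = (\<Prod>i\<in>I. \<Sum>x\<in>B i. if v i = x then y else 1)"
    using I B by (rule prod_sum_PiE[symmetric])
  also have "\<dots> = (\<Prod>i\<in>I. y + real (card (B i)) - 1)"
  proof (intro prod.cong refl)
    fix i assume "i \<in> I"
    then have "v i \<in> B i" "finite (B i)"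
      using v B by auto
    moreover from this have "1 \<le> card (B i)"
      by (metis One_nat_def Suc_leI card_gt_0_iff empty_iff)
    ultimately show "(\<Sum>x\<in>B i. if v i = x then y else 1) = y + real (card (B i)) - 1"
      by (simp add: sum.If_cases Diff_eq[symmetric] card_Diff_singleton of_nat_diff)
  qed
  finally show ?thesis .
qed

section \<open>Mixtures of conditioned distributions\<close>

definition cond_mixture_density :: "'a pmf \<Rightarrow> ('b \<Rightarrow> 'a set) \<Rightarrow> 'b set \<Rightarrow> 'a \<Rightarrow> real" where
  "cond_mixture_density M E V x =
     (\<Sum>v\<in>V. indicator (E v) x / measure_pmf.prob M (E v)) / card V"

lemma pmf_bind_cond_pmf_of_set:
  assumes "finite V" "V \<noteq> {}" "\<And>v. v \<in> V \<Longrightarrow> set_pmf M \<inter> E v \<noteq> {}"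
  shows "pmf (pmf_of_set V \<bind> (\<lambda>v. cond_pmf M (E v))) x = cond_mixture_density M E V x * pmf M x"
proof -
  have "pmf (pmf_of_set V \<bind> (\<lambda>v. cond_pmf M (E v))) x = (\<Sum>v\<in>V. pmf (cond_pmf M (E v)) x) / card V"
    using assms(2,1) by (rule pmf_bind_pmf_of_set)
  also have "\<dots> = (\<Sum>v\<in>V. indicator (E v) x / measure_pmf.prob M (E v) * pmf M x) / card V"
    using assms(3) by (intro sum.cong arg_cong2[where f="(/)"]) (auto simp: pmf_cond)
  finally show ?thesis
    by (simp add: cond_mixture_density_def sum_distrib_right)
qed

lemma expectation_cond_mixture_density:
  assumes "finite (set_pmf M)" "finite V" "V \<noteq> {}" "\<And>v. v \<in> V \<Longrightarrow> set_pmf M \<inter> E v \<noteq> {}"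
  shows "measure_pmf.expectation M (cond_mixture_density M E V) = 1"
proof -
  have "measure_pmf.expectation M (cond_mixture_density M E V)
      = (\<Sum>v\<in>V. measure_pmf.prob M (E v) / measure_pmf.prob M (E v)) / card V"
    unfolding cond_mixture_density_def
    by (simp add: integrable_measure_pmf_finite[OF assms(1)] Bochner_Integration.integral_sum)
  also have "\<dots> = 1"
    using assms(2-4) by (simp add: measure_measure_pmf_not_zero)
  finally show ?thesis .
qed

lemma expectation_cond_mixture_density_sq:
  assumes "finite (set_pmf M)"
  shows "measure_pmf.expectation M (\<lambda>x. (cond_mixture_density M E V x)\<^sup>2)
      = (\<Sum>v\<in>V. \<Sum>w\<in>V. measure_pmf.prob M (E v \<inter> E w)
            / (measure_pmf.prob M (E v) * measure_pmf.prob M (E w))) / (card V)\<^sup>2"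
proof -
  have sq: "(cond_mixture_density M E V x)\<^sup>2 = (\<Sum>v\<in>V. \<Sum>w\<in>V. indicator (E v \<inter> E w) x
            / (measure_pmf.prob M (E v) * measure_pmf.prob M (E w))) / (card V)\<^sup>2" for x
    by (simp add: cond_mixture_density_def power_divide power2_eq_square sum_product
        indicator_inter_arith)
  show ?thesis
    unfolding sq
    by (simp add: integrable_measure_pmf_finite[OF assms(1)] Bochner_Integration.integral_sum)
qed

lemma prob_ge_of_second_moment:
  fixes L :: "'a \<Rightarrow> real"
  assumes "finite (set_pmf M)" "measure_pmf.expectation M L = 1"
    "measure_pmf.expectation M (\<lambda>x. (L x)\<^sup>2) \<le> 1 + \<epsilon>" "\<beta> < 1"
  shows "1 - \<epsilon> / (1 - \<beta>)\<^sup>2 \<le> measure_pmf.prob M {x. \<beta> \<le> L x}"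
proof -
  have int: "integrable M f" for f :: "'a \<Rightarrow> real"
    using assms(1) by (rule integrable_measure_pmf_finite)
  have variance: "measure_pmf.expectation M (\<lambda>x. (L x - 1)\<^sup>2) \<le> \<epsilon>"
    using assms(2,3) by (simp add: power2_diff int algebra_simps)
  have "measure_pmf.prob M {x. L x < \<beta>} \<le> measure_pmf.prob M {x\<in>space M. 1 - \<beta> \<le> \<bar>L x - 1\<bar>}"
    by (intro measure_pmf.finite_measure_mono) auto
  also have "\<dots> \<le> measure_pmf.expectation M (\<lambda>x. (L x - 1)\<^sup>2) / (1 - \<beta>)\<^sup>2"
    using assms(4) by (intro measure_pmf.second_moment_method) (auto simp: int)
  also have "\<dots> \<le> \<epsilon> / (1 - \<beta>)\<^sup>2"
    using variance by (simp add: divide_right_mono)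
  finally have "measure_pmf.prob M {x. L x < \<beta>} \<le> \<epsilon> / (1 - \<beta>)\<^sup>2" .
  moreover have "{x. \<beta> \<le> L x} = UNIV - {x. L x < \<beta>}"
    by auto
  ultimately show ?thesis
    using measure_pmf.prob_compl[of "{x. L x < \<beta>}" M] by simp
qed

section \<open>Random subsets\<close>

definition random_subset :: "'a set \<Rightarrow> real \<Rightarrow> 'a set pmf" where
  "random_subset U p = map_pmf (\<lambda>f. {e \<in> U. f e}) (Pi_pmf U False (\<lambda>_. bernoulli_pmf p))"

definition pattern_prob :: "real \<Rightarrow> 'a set \<Rightarrow> 'a set \<Rightarrow> real" where
  "pattern_prob p S A = p ^ card A * (1 - p) ^ card (S - A)"

lemma set_pmf_random_subset: "set_pmf (random_subset U p) \<subseteq> Pow U"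
  unfolding random_subset_def by auto

lemma finite_set_pmf_random_subset: "finite U \<Longrightarrow> finite (set_pmf (random_subset U p))"
  using set_pmf_random_subset by (rule finite_subset) simp

lemma prob_random_subset_pattern:
  assumes U: "finite U" and "S \<subseteq> U" "A \<subseteq> S" and p: "0 \<le> p" "p \<le> 1"
  shows "measure_pmf.prob (random_subset U p) {G. G \<inter> S = A} = pattern_prob p S A"
proof -
  define B where "B e = (if e \<in> S then {e \<in> A} else UNIV)" for e
  have "{f. {e \<in> U. f e} \<inter> S = A} = Pi U B"
    using assms(2,3) unfolding B_def Pi_def by auto
  then have "measure_pmf.prob (random_subset U p) {G. G \<inter> S = A}
      = measure_pmf.prob (Pi_pmf U False (\<lambda>_. bernoulli_pmf p)) (Pi U B)"
    by (simp add: random_subset_def)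
  also have "\<dots> = (\<Prod>e\<in>U. measure_pmf.prob (bernoulli_pmf p) (B e))"
    using U by (rule measure_Pi_pmf_Pi)
  also have "\<dots> = (\<Prod>e\<in>U. if e \<in> S then (if e \<in> A then p else 1 - p) else 1)"
    using p by (intro prod.cong) (auto simp: B_def measure_pmf_single)
  also have "\<dots> = (\<Prod>e\<in>S. if e \<in> A then p else 1 - p)"
    using assms(2) U by (intro prod.mono_neutral_cong_right) (auto intro: finite_subset)
  also have "\<dots> = pattern_prob p S A"
    using assms(2,3) U finite_subset[OF assms(2) U]
    by (simp add: pattern_prob_def prod.If_cases Int_absorb1 Diff_eq[symmetric])
  finally show ?thesis .
qed

lemma pmf_random_subset:
  assumes "finite U" "G \<subseteq> U" "0 \<le> p" "p \<le> 1"
  shows "pmf (random_subset U p) G = pattern_prob p U G"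
proof -
  have "{G'. G' \<inter> U = G} \<inter> set_pmf (random_subset U p) = {G} \<inter> set_pmf (random_subset U p)"
    using set_pmf_random_subset[of U p] by auto
  then have "measure_pmf.prob (random_subset U p) {G'. G' \<inter> U = G} = pmf (random_subset U p) G"
    by (metis measure_Int_set_pmf measure_pmf_single)
  with prob_random_subset_pattern[OF assms(1) order_refl assms(2-4)] show ?thesis
    by simp
qed

lemma pattern_prob_pos: "0 < p \<Longrightarrow> p < 1 \<Longrightarrow> 0 < pattern_prob p S A"
  unfolding pattern_prob_def by simp

lemma pattern_prob_split:
  assumes "finite U" "P \<subseteq> U" "G \<subseteq> U"
  shows "pattern_prob p U G = pattern_prob p (U - P) (G - P) * pattern_prob p P (G \<inter> P)"
proof -
  have fin: "finite (U - P)" "finite P"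
    using assms finite_subset by auto
  have "card G = card (G \<inter> P) + card (G - P)"
    using assms finite_subset by (intro card_Int_Diff) auto
  moreover have "card (U - G) = card (U - P - (G - P)) + card (P - G \<inter> P)"
  proof -
    have "U - G = (U - P - (G - P)) \<union> (P - G \<inter> P)"
      using assms by auto
    moreover have "(U - P - (G - P)) \<inter> (P - G \<inter> P) = {}"
      by auto
    ultimately show ?thesis
      using fin by (simp add: card_Un_disjoint)
  qed
  ultimately show ?thesis
    unfolding pattern_prob_def by (simp add: power_add algebra_simps)
qed

lemma pattern_prob_union_inter:
  assumes "finite P" "finite P'" "A \<subseteq> P" "A' \<subseteq> P'" "A \<inter> P' = A' \<inter> P"
  shows "pattern_prob p P A * pattern_prob p P' A'
       = pattern_prob p (P \<union> P') (A \<union> A') * pattern_prob p (P \<inter> P') (A \<inter> P')"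
proof -
  have "finite A" "finite A'" "A \<inter> A' = A \<inter> P'"
    using assms finite_subset by blast+
  then have card_edges: "card A + card A' = card (A \<union> A') + card (A \<inter> P')"
    by (metis card_Un_Int)
  have "(P - A) \<union> (P' - A') = P \<union> P' - (A \<union> A')" "(P - A) \<inter> (P' - A') = P \<inter> P' - A \<inter> P'"
    using assms by blast+
  then have card_non_edges: "card (P - A) + card (P' - A')
      = card (P \<union> P' - (A \<union> A')) + card (P \<inter> P' - A \<inter> P')"
    using card_Un_Int[of "P - A" "P' - A'"] assms(1,2) by simp
  have "pattern_prob p P A * pattern_prob p P' A'
      = p ^ (card A + card A') * (1 - p) ^ (card (P - A) + card (P' - A'))"
    unfolding pattern_prob_def by (simp add: power_add algebra_simps)
  also have "\<dots> = pattern_prob p (P \<union> P') (A \<union> A') * pattern_prob p (P \<inter> P') (A \<inter> P')"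
    unfolding card_edges card_non_edges pattern_prob_def by (simp add: power_add algebra_simps)
  finally show ?thesis .
qed

lemma inverse_pattern_prob_le:
  assumes p: "0 < p" "p < 1" and "real (card A) \<le> a" "card (S - A) \<le> b"
  shows "1 / pattern_prob p S A \<le> (1 / p) powr a * (1 / (1 - p)) ^ b"
proof -
  have "(1 / p) ^ card A = (1 / p) powr real (card A)"
    using p by (simp add: powr_realpow)
  also have "\<dots> \<le> (1 / p) powr a"
    using p assms(3) by (intro powr_mono) auto
  finally have "(1 / p) ^ card A \<le> (1 / p) powr a" .
  moreover have "(1 / (1 - p)) ^ card (S - A) \<le> (1 / (1 - p)) ^ b"
    using p assms(4) by (intro power_increasing) auto
  ultimately have "(1 / p) ^ card A * (1 / (1 - p)) ^ card (S - A) \<le> (1 / p) powr a * (1 / (1 - p)) ^ b"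
    using p by (intro mult_mono) auto
  then show ?thesis
    by (simp add: pattern_prob_def power_one_over)
qed

lemma random_subset_replace_eq_cond:
  assumes U: "finite U" and P: "P \<subseteq> U" and A: "A \<subseteq> P" and p: "0 < p" "p < 1"
  shows "map_pmf (\<lambda>G. (G - P) \<union> A) (random_subset U p)
       = cond_pmf (random_subset U p) {G. G \<inter> P = A}"
proof (rule pmf_eqI)
  fix G
  let ?M = "random_subset U p" and ?E = "{G. G \<inter> P = A}" and ?r = "\<lambda>G. (G - P) \<union> A"
  have prob_E: "measure_pmf.prob ?M ?E = pattern_prob p P A"
    using prob_random_subset_pattern[OF U P A] p by simp
  then have E: "set_pmf ?M \<inter> ?E \<noteq> {}"
    using pattern_prob_pos[OF p, of P A] by (simp flip: measure_pmf_zero_iff)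
  have replace_eq_iff: "?r G' = G \<longleftrightarrow> G \<inter> P = A \<and> G' \<inter> (U - P) = G - P" if "G' \<subseteq> U" for G'
    using that A P by blast
  have outside: "pmf ?M G' = 0" if "\<not> G' \<subseteq> U" for G'
    using that set_pmf_random_subset[of U p] by (auto simp: set_pmf_iff)
  show "pmf (map_pmf ?r ?M) G = pmf (cond_pmf ?M ?E) G"
  proof (cases "G \<subseteq> U \<and> G \<inter> P = A")
    case True
    have same: "G' \<in> ?r -` {G} \<longleftrightarrow> G' \<in> {G'. G' \<inter> (U - P) = G - P}" if "G' \<subseteq> U" for G'
      using replace_eq_iff[OF that] True by simp
    have "pmf (map_pmf ?r ?M) G = measure_pmf.prob ?M {G'. G' \<inter> (U - P) = G - P}"
      unfolding pmf_map by (intro measure_prob_cong_0) (metis DiffE outside same)+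
    also have "\<dots> = pattern_prob p (U - P) (G - P)"
      using True p by (intro prob_random_subset_pattern[OF U]) auto
    also have "\<dots> = pattern_prob p U G / pattern_prob p P A"
      using pattern_prob_split[OF U P, of G p] True pattern_prob_pos[OF p, of P A] by simp
    also have "\<dots> = pmf (cond_pmf ?M ?E) G"
      using True p by (simp add: pmf_cond[OF E] prob_E pmf_random_subset[OF U])
    finally show ?thesis .
  next
    case False
    have "?r G' \<noteq> G" if "G' \<subseteq> U" for G'
      using replace_eq_iff[OF that] False that A P by blast
    then have "pmf (map_pmf ?r ?M) G = 0"
      unfolding pmf_map measure_pmf_zero_iff using set_pmf_random_subset[of U p] by blast
    moreover have "G \<in> ?E \<Longrightarrow> pmf ?M G = 0"
      using False outside by auto
    ultimately show ?thesis
      by (simp add: pmf_cond[OF E])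
  qed
qed

lemma pattern_pair_iff:
  fixes G P P' A A' :: "'a set"
  assumes "A \<subseteq> P" "A' \<subseteq> P'" "A \<inter> P' = A' \<inter> P"
  shows "G \<inter> P = A \<and> G \<inter> P' = A' \<longleftrightarrow> G \<inter> (P \<union> P') = A \<union> A'"
proof
  assume G: "G \<inter> (P \<union> P') = A \<union> A'"
  have "G \<inter> P = G \<inter> (P \<union> P') \<inter> P" "G \<inter> P' = G \<inter> (P \<union> P') \<inter> P'"
    by auto
  then show "G \<inter> P = A \<and> G \<inter> P' = A'"
    unfolding G using assms by auto
qed (simp add: Int_Un_distrib)

lemma pattern_pair_consistent:
  fixes G P P' A A' :: "'a set"
  assumes "G \<inter> P = A" "G \<inter> P' = A'"
  shows "A \<inter> P' = A' \<inter> P"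
  using assms by (auto simp: Int_ac)

lemma prob_random_subset_two_patterns:
  assumes U: "finite U" and sub: "A \<subseteq> P" "P \<subseteq> U" "A' \<subseteq> P'" "P' \<subseteq> U" and p: "0 < p" "p < 1"
  shows "measure_pmf.prob (random_subset U p) ({G. G \<inter> P = A} \<inter> {G. G \<inter> P' = A'})
           / (measure_pmf.prob (random_subset U p) {G. G \<inter> P = A}
              * measure_pmf.prob (random_subset U p) {G. G \<inter> P' = A'})
         \<le> 1 / pattern_prob p (P \<inter> P') (A \<inter> P')"
proof (cases "A \<inter> P' = A' \<inter> P")
  case True
  have "{G. G \<inter> P = A} \<inter> {G. G \<inter> P' = A'} = {G. G \<inter> (P \<union> P') = A \<union> A'}"
    using pattern_pair_iff[OF sub(1,3) True] by blast
  moreover have "measure_pmf.prob (random_subset U p) {G. G \<inter> (P \<union> P') = A \<union> A'}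
      = pattern_prob p (P \<union> P') (A \<union> A')"
    using sub p by (intro prob_random_subset_pattern[OF U]) auto
  moreover have "pattern_prob p P A * pattern_prob p P' A'
      = pattern_prob p (P \<union> P') (A \<union> A') * pattern_prob p (P \<inter> P') (A \<inter> P')"
    using U sub by (intro pattern_prob_union_inter True) (auto intro: finite_subset)
  ultimately show ?thesis
    using sub p pattern_prob_pos[OF p, of "P \<union> P'" "A \<union> A'"]
    by (simp add: prob_random_subset_pattern[OF U])
next
  case False
  then have "{G. G \<inter> P = A} \<inter> {G. G \<inter> P' = A'} = {}"
    using pattern_pair_consistent by blast
  then show ?thesis
    using pattern_prob_pos[OF p, of "P \<inter> P'" "A \<inter> P'"] by simp
qed

section \<open>Planting on a transversal\<close>

definition transversals :: "nat \<Rightarrow> nat \<Rightarrow> (nat \<Rightarrow> nat) set" where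
  "transversals n m = (\<Pi>\<^sub>E i\<in>{1..m}. part n m i)"

definition pairs_within :: "nat \<Rightarrow> nat set \<Rightarrow> nat set set" where
  "pairs_within n M = {e \<in> all_pairs n. e \<subseteq> M}"

definition planted_event :: "nat \<Rightarrow> nat \<Rightarrow> nat set set \<Rightarrow> (nat \<Rightarrow> nat) \<Rightarrow> nat set set set" where
  "planted_event n m H v = {G. G \<inter> pairs_within n (v ` {1..m}) = image v ` H}"

lemma finite_all_pairs: "finite (all_pairs n)"
  unfolding all_pairs_def by (rule finite_subset[of _ "Pow {1..n}"]) auto

lemma gnp_eq_random_subset: "gnp n p = random_subset (all_pairs n) p"
  unfolding gnp_def random_subset_def ..

lemma part_unique:
  assumes "x \<in> part n m i" "x \<in> part n m j" "1 \<le> i" "1 \<le> j"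
  shows "i = j"
proof (rule ccontr)
  assume "i \<noteq> j"
  have "x \<le> i * (n div m)" "x \<le> j * (n div m)"
    and "(i - 1) * (n div m) < x" "(j - 1) * (n div m) < x"
    using assms(1,2) unfolding part_def by auto
  moreover have "i * (n div m) \<le> (j - 1) * (n div m) \<or> j * (n div m) \<le> (i - 1) * (n div m)"
    using \<open>i \<noteq> j\<close> assms(3,4) by (cases "i < j") (auto intro: mult_right_mono)
  ultimately show False
    by linarith
qed

lemma card_part: "1 \<le> i \<Longrightarrow> card (part n m i) = n div m"
  unfolding part_def by (cases i) auto

lemma part_subset_vertices:
  assumes "m dvd n" "i \<in> {1..m}"
  shows "part n m i \<subseteq> {1..n}"
proof -
  have "i * (n div m) \<le> m * (n div m)"
    using assms(2) by (intro mult_right_mono) auto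
  then show ?thesis
    using assms(1) unfolding part_def by auto
qed

lemma finite_transversals: "finite (transversals n m)"
  unfolding transversals_def part_def by (intro finite_PiE) auto

lemma card_transversals: "card (transversals n m) = (n div m) ^ m"
  unfolding transversals_def by (simp add: card_PiE card_part)

lemma transversals_nonempty: "0 < n div m \<Longrightarrow> transversals n m \<noteq> {}"
  using card_transversals[of n m] by auto

lemma transversal_agree_index:
  assumes "v \<in> transversals n m" "w \<in> transversals n m" "i \<in> {1..m}" "j \<in> {1..m}" "v i = w j"
  shows "i = j"
proof -
  have "v i \<in> part n m i" "w j \<in> part n m j"
    using assms(1-4) unfolding transversals_def by auto
  then show ?thesis
    using part_unique assms(3-5) by auto
qed

lemma transversal_pairs_subset:
  assumes "v \<in> transversals n m" "m dvd n" "is_graph m H"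
  shows "image v ` H \<subseteq> pairs_within n (v ` {1..m})"
proof
  fix e assume "e \<in> image v ` H"
  then obtain f where f: "f \<in> H" "e = v ` f"
    by auto
  then have f_pair: "f \<subseteq> {1..m}" "card f = 2"
    using assms(3) unfolding is_graph_def all_pairs_def by auto
  have "inj_on v {1..m}"
    using transversal_agree_index[OF assms(1) assms(1)] by (auto intro: inj_onI)
  then have "card e = 2"
    using f f_pair by (metis card_image inj_on_subset)
  moreover have "v ` {1..m} \<subseteq> {1..n}"
    using assms(1,2) part_subset_vertices unfolding transversals_def by blast
  ultimately show "e \<in> pairs_within n (v ` {1..m})"
    using f f_pair unfolding pairs_within_def all_pairs_def by auto
qed

lemma prob_planted_event:
  assumes "v \<in> transversals n m" "m dvd n" "is_graph m H" "0 \<le> p" "p \<le> 1"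
  shows "measure_pmf.prob (gnp n p) (planted_event n m H v)
       = pattern_prob p (pairs_within n (v ` {1..m})) (image v ` H)"
  unfolding gnp_eq_random_subset planted_event_def
  using transversal_pairs_subset[OF assms(1-3)] assms(4,5)
  by (intro prob_random_subset_pattern finite_all_pairs) (auto simp: pairs_within_def)

lemma gHnp_eq_cond_mixture:
  assumes "m dvd n" "0 < n div m" "is_graph m H" "0 < p" "p < 1"
  shows "gHnp n p m H = pmf_of_set (transversals n m) \<bind> (\<lambda>v. cond_pmf (gnp n p) (planted_event n m H v))"
proof -
  have "gHnp n p m H = pmf_of_set (transversals n m) \<bind> (\<lambda>v. map_pmf (plant m H v) (gnp n p))"
    unfolding gHnp_def transversals_def map_pmf_def by (subst bind_commute_pmf) simp
  also have "\<dots> = pmf_of_set (transversals n m) \<bind> (\<lambda>v. cond_pmf (gnp n p) (planted_event n m H v))"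
  proof (intro bind_pmf_cong refl)
    fix v assume "v \<in> set_pmf (pmf_of_set (transversals n m))"
    then have v: "v \<in> transversals n m"
      using transversals_nonempty[OF assms(2)] finite_transversals by simp
    have "plant m H v G = (G - pairs_within n (v ` {1..m})) \<union> image v ` H"
      if "G \<in> set_pmf (gnp n p)" for G
      using that set_pmf_random_subset
      unfolding gnp_eq_random_subset plant_def pairs_within_def by fastforce
    then have "map_pmf (plant m H v) (gnp n p)
        = map_pmf (\<lambda>G. (G - pairs_within n (v ` {1..m})) \<union> image v ` H) (gnp n p)"
      by (rule map_pmf_cong[OF refl])
    then show "map_pmf (plant m H v) (gnp n p) = cond_pmf (gnp n p) (planted_event n m H v)"
      unfolding gnp_eq_random_subset planted_event_def
      using transversal_pairs_subset[OF v assms(1,3)] assms(4,5)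
      by (simp add: random_subset_replace_eq_cond finite_all_pairs pairs_within_def)
  qed
  finally show ?thesis .
qed

section \<open>Overlapping planted copies\<close>

definition agreement :: "nat \<Rightarrow> (nat \<Rightarrow> nat) \<Rightarrow> (nat \<Rightarrow> nat) \<Rightarrow> nat set" where
  "agreement m v w = {i \<in> {1..m}. v i = w i}"

lemma card_pairs_within_le:
  assumes M: "finite M"
  shows "card (pairs_within n M) \<le> card M ^ 2"
proof -
  have "card (pairs_within n M) \<le> card {e. e \<subseteq> M \<and> card e = 2}"
    using M by (intro card_mono) (auto simp: pairs_within_def all_pairs_def)
  also have "\<dots> = card M choose 2"
    using M by (rule n_subsets)
  also have "\<dots> \<le> card M ^ 2"
    by (cases "2 \<le> card M") (auto intro: binomial_le_pow simp: binomial_eq_0)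
  finally show ?thesis .
qed

lemma pairs_within_overlap_subset:
  assumes "v \<in> transversals n m" "w \<in> transversals n m"
  shows "pairs_within n (v ` {1..m}) \<inter> pairs_within n (w ` {1..m})
       \<subseteq> pairs_within n (v ` agreement m v w)"
proof -
  have "v ` {1..m} \<inter> w ` {1..m} \<subseteq> v ` agreement m v w"
  proof
    fix x assume "x \<in> v ` {1..m} \<inter> w ` {1..m}"
    then obtain i j where "i \<in> {1..m}" "j \<in> {1..m}" "x = v i" "v i = w j"
      by auto
    moreover from this have "i = j"
      using transversal_agree_index[OF assms] by blast
    ultimately show "x \<in> v ` agreement m v w"
      unfolding agreement_def by auto
  qed
  then show ?thesis
    unfolding pairs_within_def by auto
qed

lemma planted_edges_overlap_subset:
  assumes "v \<in> transversals n m" "w \<in> transversals n m" "is_graph m H"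
  shows "image v ` H \<inter> pairs_within n (w ` {1..m}) \<subseteq> image v ` {e \<in> H. e \<subseteq> agreement m v w}"
proof
  fix e assume e: "e \<in> image v ` H \<inter> pairs_within n (w ` {1..m})"
  then obtain f where f: "f \<in> H" "e = v ` f"
    by auto
  have "f \<subseteq> {1..m}"
    using f(1) assms(3) unfolding is_graph_def all_pairs_def by blast
  have "e \<subseteq> w ` {1..m}"
    using e unfolding pairs_within_def by simp
  have "f \<subseteq> agreement m v w"
  proof
    fix i assume "i \<in> f"
    then have i: "i \<in> {1..m}" and "v i \<in> w ` {1..m}"
      using \<open>f \<subseteq> {1..m}\<close> \<open>e \<subseteq> w ` {1..m}\<close> f(2) by auto
    then obtain j where j: "j \<in> {1..m}" "v i = w j"
      by blast
    then have "v i = w i"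
      using transversal_agree_index[OF assms(1,2) i j] by simp
    then show "i \<in> agreement m v w"
      using i unfolding agreement_def by simp
  qed
  then show "e \<in> image v ` {e \<in> H. e \<subseteq> agreement m v w}"
    using f by blast
qed

lemma balanced_card_edges_le:
  assumes "is_graph m H" "balanced m H" "T \<subseteq> {1..m}"
  shows "2 * real (card {e \<in> H. e \<subseteq> T}) \<le> avg_degree m H * real (card T)"
proof (cases "T = {}")
  case True
  then have "{e \<in> H. e \<subseteq> T} = {}"
    using assms(1) unfolding is_graph_def all_pairs_def by auto
  then show ?thesis
    using True by simp
next
  case False
  then have "0 < real (card T)"
    using assms(3) finite_subset by (auto simp: card_gt_0_iff)
  moreover have "induced_avg_degree H T \<le> avg_degree m H"
    using assms(2,3) False unfolding balanced_def by auto
  ultimately show ?thesis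
    unfolding induced_avg_degree_def by (simp add: divide_le_eq mult.commute)
qed

lemma inverse_pattern_prob_overlap_le:
  assumes v: "v \<in> transversals n m" and w: "w \<in> transversals n m"
    and H: "is_graph m H" "balanced m H" and p: "0 < p" "p < 1"
  shows "1 / pattern_prob p (pairs_within n (v ` {1..m}) \<inter> pairs_within n (w ` {1..m}))
                            (image v ` H \<inter> pairs_within n (w ` {1..m}))
       \<le> ((1 / p) powr (avg_degree m H / 2) * (1 / (1 - p)) ^ m) ^ card (agreement m v w)"
    (is "1 / pattern_prob p ?S ?A \<le> _")
proof -
  define T where "T = agreement m v w"
  have T: "T \<subseteq> {1..m}" "finite T"
    unfolding T_def agreement_def by auto
  then have "card T \<le> m"
    using card_mono[OF _ T(1)] by simp
  have "finite ?S"
    by (rule finite_subset[OF _ finite_all_pairs]) (auto simp: pairs_within_def)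
  have "card (?S - ?A) \<le> card (pairs_within n (v ` T))"
    using pairs_within_overlap_subset[OF v w] unfolding T_def
    by (intro card_mono) (auto simp: pairs_within_def intro: finite_subset[OF _ finite_all_pairs])
  also have "\<dots> \<le> card (v ` T) ^ 2"
    using T(2) by (intro card_pairs_within_le) simp
  also have "\<dots> \<le> card T ^ 2"
    using T(2) by (intro power_mono card_image_le) auto
  also have "\<dots> \<le> m * card T"
    using \<open>card T \<le> m\<close> by (simp add: power2_eq_square)
  finally have non_edges: "card (?S - ?A) \<le> m * card T" .
  have "finite H"
    using H(1) unfolding is_graph_def by (rule finite_subset) (rule finite_all_pairs)
  then have "card ?A \<le> card (image v ` {e \<in> H. e \<subseteq> T})"
    using planted_edges_overlap_subset[OF v w H(1)] unfolding T_def by (intro card_mono) auto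
  also have "\<dots> \<le> card {e \<in> H. e \<subseteq> T}"
    using \<open>finite H\<close> by (intro card_image_le) auto
  finally have edges: "real (card ?A) \<le> avg_degree m H / 2 * real (card T)"
    using balanced_card_edges_le[OF H T(1)] by simp
  have "1 / pattern_prob p ?S ?A
      \<le> (1 / p) powr (avg_degree m H / 2 * real (card T)) * (1 / (1 - p)) ^ (m * card T)"
    by (rule inverse_pattern_prob_le[OF p edges non_edges])
  also have "\<dots> = ((1 / p) powr (avg_degree m H / 2) * (1 / (1 - p)) ^ m) ^ card T"
    using p by (simp add: power_mult power_mult_distrib powr_power mult.commute)
  finally show ?thesis
    unfolding T_def .
qed

lemma sum_transversals_power_card_agreement:
  fixes y :: real
  assumes "v \<in> transversals n m"
  shows "(\<Sum>w\<in>transversals n m. y ^ card (agreement m v w)) = (y + real (n div m) - 1) ^ m"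
proof -
  have "(\<Sum>w\<in>transversals n m. y ^ card (agreement m v w))
      = (\<Prod>i\<in>{1..m}. y + real (card (part n m i)) - 1)"
    using assms unfolding transversals_def agreement_def
    by (intro sum_PiE_power_card_agree) (auto simp: part_def)
  then show ?thesis
    by (simp add: card_part)
qed

section \<open>The second moment\<close>

definition planted_moment_bound :: "nat \<Rightarrow> nat \<Rightarrow> real \<Rightarrow> real \<Rightarrow> real" where
  "planted_moment_bound n m p \<alpha> =
     (((1 / p) powr (\<alpha> / 2) * (1 / (1 - p)) ^ m + real (n div m) - 1) / real (n div m)) ^ m"

lemma expectation_planted_density_sq_le:
  assumes "m dvd n" "0 < n div m" and H: "is_graph m H" "balanced m H" and p: "0 < p" "p < 1"
  shows "measure_pmf.expectation (gnp n p)
           (\<lambda>G. (cond_mixture_density (gnp n p) (planted_event n m H) (transversals n m) G)\<^sup>2)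
       \<le> planted_moment_bound n m p (avg_degree m H)"
proof -
  let ?M = "gnp n p" and ?E = "planted_event n m H" and ?V = "transversals n m"
  define y where "y = (1 / p) powr (avg_degree m H / 2) * (1 / (1 - p)) ^ m"
  define k where "k = real (n div m)"
  have ratio: "measure_pmf.prob ?M (?E v \<inter> ?E w) / (measure_pmf.prob ?M (?E v) * measure_pmf.prob ?M (?E w))
      \<le> y ^ card (agreement m v w)" if v: "v \<in> ?V" and w: "w \<in> ?V" for v w
    using prob_random_subset_two_patterns[OF finite_all_pairs
        transversal_pairs_subset[OF v assms(1) H(1)] _ transversal_pairs_subset[OF w assms(1) H(1)] _ p]
      inverse_pattern_prob_overlap_le[OF v w H p]
    unfolding gnp_eq_random_subset planted_event_def y_def
    by (force simp: pairs_within_def)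
  have "measure_pmf.expectation ?M (\<lambda>G. (cond_mixture_density ?M ?E ?V G)\<^sup>2)
      = (\<Sum>v\<in>?V. \<Sum>w\<in>?V. measure_pmf.prob ?M (?E v \<inter> ?E w)
            / (measure_pmf.prob ?M (?E v) * measure_pmf.prob ?M (?E w))) / (card ?V)\<^sup>2"
    unfolding gnp_eq_random_subset
    by (intro expectation_cond_mixture_density_sq finite_set_pmf_random_subset finite_all_pairs)
  also have "\<dots> \<le> (\<Sum>v\<in>?V. \<Sum>w\<in>?V. y ^ card (agreement m v w)) / (card ?V)\<^sup>2"
    by (intro divide_right_mono sum_mono ratio) auto
  also have "\<dots> = (\<Sum>v\<in>?V. (y + k - 1) ^ m) / (k ^ m)\<^sup>2"
    by (simp add: sum_transversals_power_card_agreement card_transversals k_def)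
  also have "\<dots> = planted_moment_bound n m p (avg_degree m H)"
    using assms(2) by (simp add: card_transversals planted_moment_bound_def y_def k_def
        power2_eq_square power_divide)
  finally show ?thesis .
qed

lemma prob_planted_likelihood_ge:
  assumes "m dvd n" "0 < n div m" and H: "is_graph m H" "balanced m H" and p: "0 < p" "p < 1"
    and "\<beta> < 1" and moment: "planted_moment_bound n m p (avg_degree m H) \<le> 1 + \<epsilon>"
  shows "1 - \<epsilon> / (1 - \<beta>)\<^sup>2
       \<le> measure_pmf.prob (gnp n p) {G. \<beta> * pmf (gnp n p) G \<le> pmf (gHnp n p m H) G}"
proof -
  let ?M = "gnp n p" and ?E = "planted_event n m H" and ?V = "transversals n m"
  let ?L = "cond_mixture_density ?M ?E ?V"
  have fin: "finite (set_pmf ?M)"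
    unfolding gnp_eq_random_subset by (intro finite_set_pmf_random_subset finite_all_pairs)
  have V: "finite ?V" "?V \<noteq> {}"
    using finite_transversals transversals_nonempty[OF assms(2)] by auto
  have E: "set_pmf ?M \<inter> ?E v \<noteq> {}" if "v \<in> ?V" for v
    using prob_planted_event[OF that assms(1) H(1)] pattern_prob_pos[OF p] p
    by (metis less_irrefl less_imp_le measure_pmf_zero_iff)
  have "1 - \<epsilon> / (1 - \<beta>)\<^sup>2 \<le> measure_pmf.prob ?M {G. \<beta> \<le> ?L G}"
    using expectation_cond_mixture_density[OF fin V E] assms(7)
      order_trans[OF expectation_planted_density_sq_le[OF assms(1,2) H p] moment]
    by (intro prob_ge_of_second_moment[OF fin]) auto
  also have "\<dots> \<le> measure_pmf.prob ?M {G. \<beta> * pmf ?M G \<le> pmf (gHnp n p m H) G}"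
  proof (rule measure_pmf.finite_measure_mono)
    show "{G. \<beta> \<le> ?L G} \<subseteq> {G. \<beta> * pmf ?M G \<le> pmf (gHnp n p m H) G}"
      using pmf_bind_cond_pmf_of_set[OF V E] gHnp_eq_cond_mixture[OF assms(1,2) H(1) p]
      by (auto intro: mult_right_mono)
  qed simp
  finally show ?thesis .
qed

section \<open>Asymptotics\<close>

lemma planted_moment_bound_eventually_le:
  fixes \<delta> \<rho> \<alpha> \<epsilon> :: real
  assumes "\<delta> < 1" "\<rho> + \<delta> < 1" "2 * \<rho> + (1 - \<delta>) * \<alpha> / 2 < 1" "0 \<le> \<alpha>" "0 < \<epsilon>"
  shows "\<forall>\<^sub>F n in sequentially. \<forall>m. m dvd n \<longrightarrow> real m = real n powr \<rho> \<longrightarrow>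
           planted_moment_bound n m (real n powr (\<delta> - 1)) \<alpha> \<le> 1 + \<epsilon>"
proof -
  define c where "c = 2 * \<rho> + (1 - \<delta>) * \<alpha> / 2 - 1"
  have "\<forall>\<^sub>F n in sequentially. 2 \<le> n \<and> real n powr (\<rho> + \<delta> - 1) < 1 / 2
          \<and> real n powr c < 1 / 4 \<and> real n powr c < \<epsilon> / 4"
    using assms by (intro eventually_conj eventually_ge_at_top eventually_powr_less) (auto simp: c_def)
  then show ?thesis
  proof (rule eventually_mono, intro allI impI)
    fix n m
    assume n: "2 \<le> n \<and> real n powr (\<rho> + \<delta> - 1) < 1 / 2 \<and> real n powr c < 1 / 4 \<and> real n powr c < \<epsilon> / 4"
      and "m dvd n" and m: "real m = real n powr \<rho>"
    define p where "p = real n powr (\<delta> - 1)"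
    define y where "y = (1 / p) powr (\<alpha> / 2) * (1 / (1 - p)) ^ m"
    have "0 < real n" "0 < real m"
      using n m by auto
    have p: "0 < p" "p < 1"
      using n assms(1) unfolding p_def by (auto intro: powr_less_one)
    have "real m * p = real n powr (\<rho> + \<delta> - 1)"
      unfolding m p_def by (simp add: powr_add[symmetric] add_diff_eq)
    then have "(1 / (1 - p)) ^ m \<le> 2"
      using n p by (intro power_inverse_one_minus_le_two) auto
    moreover have "(1 / p) powr (\<alpha> / 2) = real n powr ((1 - \<delta>) * \<alpha> / 2)"
      using \<open>0 < real n\<close> unfolding p_def by (simp add: powr_minus_divide[symmetric] powr_powr)
    ultimately have y_le: "y \<le> 2 * real n powr ((1 - \<delta>) * \<alpha> / 2)"
      unfolding y_def by (simp add: mult.commute mult_right_mono)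
    have "1 \<le> (1 / p) powr (\<alpha> / 2)" "1 \<le> (1 / (1 - p)) ^ m"
      using p assms(4) by (auto intro: ge_one_powr_ge_zero one_le_power)
    then have "1 \<le> y"
      unfolding y_def using mult_mono[of 1 _ 1] by fastforce
    have k: "real (n div m) = real n / real m"
      using \<open>m dvd n\<close> by (rule real_of_nat_div)
    have "planted_moment_bound n m p \<alpha> \<le> exp (real m * y / (real n / real m))"
      unfolding planted_moment_bound_def y_def[symmetric] k
      using \<open>1 \<le> y\<close> \<open>0 < real n\<close> \<open>0 < real m\<close> by (intro power_ratio_le_exp) auto
    also have "real m * y / (real n / real m) = real m ^ 2 * y / real n"
      by (simp add: power2_eq_square)
    also have "\<dots> \<le> real n powr (2 * \<rho>) * (2 * real n powr ((1 - \<delta>) * \<alpha> / 2)) / real n"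
      using y_le powr_power[of "real n" \<rho> 2] \<open>0 < real n\<close> unfolding m
      by (intro divide_right_mono mult_left_mono) (auto simp: mult.commute)
    also have "\<dots> = 2 * real n powr c"
      using \<open>0 < real n\<close> unfolding c_def by (simp add: powr_add powr_diff)
    also have "exp (2 * real n powr c) \<le> 1 + 2 * (2 * real n powr c)"
      using n by (intro real_exp_bound_lemma) auto
    also have "\<dots> \<le> 1 + \<epsilon>"
      using n by simp
    finally show "planted_moment_bound n m (real n powr (\<delta> - 1)) \<alpha> \<le> 1 + \<epsilon>"
      unfolding p_def by simp
  qed
qed

lemma prob_planted_likelihood_ge_eventually:
  fixes \<delta> \<rho> \<alpha> \<epsilon> :: real
  assumes "\<delta> < 1" "\<rho> + \<delta> < 1" "2 * \<rho> + (1 - \<delta>) * \<alpha> / 2 < 1" "0 \<le> \<alpha>" "0 < \<epsilon>"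
  shows "\<forall>\<^sub>F n in sequentially. \<forall>m H \<beta>.
           m dvd n \<and> real m = real n powr \<rho> \<and> is_graph m H \<and> avg_degree m H = \<alpha> \<and> balanced m H
           \<and> \<beta> < 1 \<longrightarrow>
           1 - \<epsilon> / (1 - \<beta>)\<^sup>2 \<le> measure_pmf.prob (gnp n (real n powr (\<delta> - 1)))
             {G. \<beta> * pmf (gnp n (real n powr (\<delta> - 1))) G \<le> pmf (gHnp n (real n powr (\<delta> - 1)) m H) G}"
  using eventually_conj[OF eventually_ge_at_top[of 2] planted_moment_bound_eventually_le[OF assms]]
proof (rule eventually_mono, intro allI impI)
  fix n m H and \<beta> :: real
  assume n: "2 \<le> n \<and> (\<forall>m. m dvd n \<longrightarrow> real m = real n powr \<rho> \<longrightarrow>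
      planted_moment_bound n m (real n powr (\<delta> - 1)) \<alpha> \<le> 1 + \<epsilon>)"
    and h: "m dvd n \<and> real m = real n powr \<rho> \<and> is_graph m H \<and> avg_degree m H = \<alpha>
      \<and> balanced m H \<and> \<beta> < 1"
  have p: "0 < real n powr (\<delta> - 1)" "real n powr (\<delta> - 1) < 1"
    using n assms(1) by (auto intro: powr_less_one)
  have "0 < real n powr \<rho>"
    using n by simp
  then have "0 < m"
    using h by (metis of_nat_0_less_iff)
  then have "0 < n div m"
    using h n by (simp add: div_greater_zero_iff dvd_imp_le)
  then show "1 - \<epsilon> / (1 - \<beta>)\<^sup>2 \<le> measure_pmf.prob (gnp n (real n powr (\<delta> - 1)))
      {G. \<beta> * pmf (gnp n (real n powr (\<delta> - 1))) G \<le> pmf (gHnp n (real n powr (\<delta> - 1)) m H) G}"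
    using h n by (intro prob_planted_likelihood_ge[OF _ _ _ _ p]) auto
qed

theorem lemmaC2:
  fixes \<delta> \<epsilon> \<alpha> \<rho> :: real
  assumes "0 < \<delta>" "\<delta> < 1"
    and "0 < \<epsilon>" "\<epsilon> < 1/7"
    and "2 < \<alpha>" "\<alpha> < min (2 / (1 - \<delta>)) 3"
    and "0 < \<rho>" "\<rho> < min ((1 - \<delta>) / 2) ((2 - \<alpha> * (1 - \<delta>)) / 4)"
  shows "\<exists>N. \<forall>n \<ge> N. \<forall>m H. \<forall>\<beta>::real.
           m dvd n \<and> real m = real n powr \<rho> \<and>
           is_graph m H \<and> avg_degree m H = \<alpha> \<and> balanced m H \<and>
           0 \<le> \<beta> \<and> \<beta> < 1 \<longrightarrow>
           (let p = real n powr (\<delta> - 1) in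
              measure_pmf.prob (gnp n p)
                {G. pmf (gHnp n p m H) G \<ge> \<beta> * pmf (gnp n p) G}
              \<ge> 1 - 4 * \<epsilon> / (1 - \<beta>)^2)"
proof -
  have "\<rho> + \<delta> < 1" "2 * \<rho> + (1 - \<delta>) * \<alpha> / 2 < 1" "0 \<le> \<alpha>"
    using assms(2,5,8) by (auto simp: field_simps)
  from prob_planted_likelihood_ge_eventually[OF assms(2) this assms(3)]
  obtain N where N: "\<And>n m H \<beta>. N \<le> n \<Longrightarrow>
      m dvd n \<and> real m = real n powr \<rho> \<and> is_graph m H \<and> avg_degree m H = \<alpha> \<and> balanced m H
      \<and> \<beta> < 1 \<Longrightarrow>
      1 - \<epsilon> / (1 - \<beta>)\<^sup>2 \<le> measure_pmf.prob (gnp n (real n powr (\<delta> - 1)))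
        {G. \<beta> * pmf (gnp n (real n powr (\<delta> - 1))) G \<le> pmf (gHnp n (real n powr (\<delta> - 1)) m H) G}"
    unfolding eventually_sequentially by blast
  show ?thesis
    unfolding Let_def
  proof (intro exI[of _ N] allI impI, goal_cases)
    case (1 n m H \<beta>)
    \<comment> \<open>The bound holds with \<open>\<epsilon>\<close> in place of \<open>4 * \<epsilon>\<close>, and without \<open>0 \<le> \<beta>\<close>.\<close>
    have "\<epsilon> / (1 - \<beta>)\<^sup>2 \<le> 4 * \<epsilon> / (1 - \<beta>)\<^sup>2"
      using assms(3) by (intro divide_right_mono) auto
    with N[of n m H \<beta>] 1 show ?case
      by linarith
  qed
qed

end
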